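(* Let $H$ be a separable infinite-dimensional complex Hilbert space, $T\in\mathcal{L}(H)$ and $\lambda\in\partial\sigma(T;H)$ (the boundary of the spectrum). Then $T-\lambda I$ is not universal. In particular, if $\sigma(T;H)=\partial\sigma(T;H)$, then $T-\lambda I$ is not universal for any $\lambda\in\mathbb{C}$.
   Context: $\mathcal{L}(H)$ denotes the bounded linear operators on $H$. Operators $T_1\in\mathcal{L}(H_1)$, $T_2\in\mathcal{L}(H_2)$ are similar if there is a linear isomorphism $J:H_1\to H_2$ with $T_1=J^{-1}T_2J$. An operator $U\in\mathcal{L}(H)$ is universal if for every $T\in\mathcal{L}(H)$ there exist a closed subspace $M\subset H$ with $U(M)\subset M$ and a constant $c\neq0$ such that $U|_M:M\to M$ and $cT:H\to H$ are similar. *)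

theory Defs
  imports "HOL-Analysis.Analysis"
begin

text \<open>Complex Hilbert spaces, encoded via their realification: a real Hilbert space
(class real_inner + complete_space) carrying a complex scalar multiplication extending
the real one, for which multiplication by i is an isometry of the real inner product.
The real inner product is the real part of the complex inner product, which is then
recovered as inner x y + i * inner x (i y) (up to convention); norm and topology agree.\<close>

class complex_vector = real_vector +
  fixes scaleC :: "complex \<Rightarrow> 'a \<Rightarrow> 'a"
  assumes scaleC_add_right: "scaleC a (x + y) = scaleC a x + scaleC a y"
    and scaleC_add_left: "scaleC (a + b) x = scaleC a x + scaleC b x"
    and scaleC_scaleC: "scaleC a (scaleC b x) = scaleC (a * b) x"
    and scaleC_one: "scaleC 1 x = x"
    and scaleR_scaleC: "scaleR r x = scaleC (complex_of_real r) x"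

class complex_inner = complex_vector + real_inner +
  assumes inner_scaleC_i: "inner (scaleC \<i> x) (scaleC \<i> y) = inner x y"

class chilbert_space = complex_inner + complete_space

definition cspan :: "'a::complex_vector set \<Rightarrow> 'a set" where
  "cspan S = {\<Sum>x\<in>F. scaleC (c x) x | F c. finite F \<and> F \<subseteq> S}"

definition csubspace :: "'a::complex_vector set \<Rightarrow> bool" where
  "csubspace M \<longleftrightarrow> 0 \<in> M \<and> (\<forall>x\<in>M. \<forall>y\<in>M. x + y \<in> M) \<and> (\<forall>c. \<forall>x\<in>M. scaleC c x \<in> M)"

definition infinite_dimensional :: "'a::complex_vector itself \<Rightarrow> bool" where
  "infinite_dimensional _ \<longleftrightarrow> \<not> (\<exists>S::'a set. finite S \<and> cspan S = UNIV)"

definition separable :: "'a::metric_space itself \<Rightarrow> bool" where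
  "separable _ \<longleftrightarrow> (\<exists>D::'a set. countable D \<and> closure D = UNIV)"

definition cblinear :: "('a::complex_inner \<Rightarrow> 'b::complex_inner) \<Rightarrow> bool" where
  "cblinear T \<longleftrightarrow> bounded_linear T \<and> (\<forall>c x. T (scaleC c x) = scaleC c (T x))"

definition invertible_op :: "('a::complex_inner \<Rightarrow> 'a) \<Rightarrow> bool" where
  "invertible_op T \<longleftrightarrow> (\<exists>S. cblinear S \<and> S \<circ> T = id \<and> T \<circ> S = id)"

definition op_spectrum :: "('a::complex_inner \<Rightarrow> 'a) \<Rightarrow> complex set" where
  "op_spectrum T = {z. \<not> invertible_op (\<lambda>x. T x - scaleC z x)}"

text \<open>U restricted to the (closed, invariant) subspace M is similar to S : H \<rightarrow> H:
there is a linear isomorphism (bounded, bijective onto M, bounded inverse) J : H \<rightarrow> M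
with U|M = J \<circ> S \<circ> J^-1, i.e. S = J^-1 \<circ> U|M \<circ> J.\<close>

definition restr_similar :: "('a::complex_inner \<Rightarrow> 'a) \<Rightarrow> 'a set \<Rightarrow> ('a \<Rightarrow> 'a) \<Rightarrow> bool" where
  "restr_similar U M S \<longleftrightarrow>
     (\<exists>J. cblinear J \<and> inj J \<and> range J = M \<and> (\<exists>C. \<forall>x. norm x \<le> C * norm (J x)) \<and>
          (\<forall>x. U (J x) = J (S x)))"

definition universal :: "('a::complex_inner \<Rightarrow> 'a) \<Rightarrow> bool" where
  "universal U \<longleftrightarrow> cblinear U \<and>
     (\<forall>T. cblinear T \<longrightarrow>
        (\<exists>M c. closed M \<and> csubspace M \<and> U ` M \<subseteq> M \<and> c \<noteq> 0 \<and>
               restr_similar U M (\<lambda>x. scaleC c (T x))))"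

end

theory Submission
  imports Defs
begin

text \<open>If \<open>U = T - \<lambda>I\<close> were universal, it would contain a restriction similar to \<open>cB\<close>, where \<open>B\<close> is
the backward shift along an orthonormal sequence. Every \<open>z\<close> with \<open>|z| < 1\<close> is an eigenvalue of
\<open>B\<close>, with eigenvector \<open>\<Sum> z\<^sup>n e\<^sub>n\<close>; the similarity carries these eigenvectors into \<open>M\<close>, so every
\<open>w\<close> with \<open>|w| < |c|\<close> is an eigenvalue of \<open>U\<close>. Hence the disc of radius \<open>|c|\<close> around \<open>\<lambda>\<close> lies
in \<open>\<sigma>(T)\<close>, and \<open>\<lambda>\<close> is an interior point of the spectrum, not a boundary point.\<close>

subclass (in chilbert_space) banach ..

lemma scaleC_Re_Im: "scaleC c (x::'a::complex_vector) = scaleR (Re c) x + scaleR (Im c) (scaleC \<i> x)"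
proof -
  have "c = complex_of_real (Re c) + complex_of_real (Im c) * \<i>" by (simp add: complex_eq_iff)
  then have "scaleC c x = scaleC (complex_of_real (Re c)) x + scaleC (complex_of_real (Im c)) (scaleC \<i> x)"
    by (metis scaleC_add_left scaleC_scaleC)
  then show ?thesis by (simp only: scaleR_scaleC)
qed

lemma scaleC_i_i: "scaleC \<i> (scaleC \<i> x) = - (x::'a::complex_vector)"
  using scaleR_scaleC[of "-1" x] by (simp add: scaleC_scaleC)

lemma scaleC_scaleR_commute: "scaleC c (scaleR r x::'a::complex_vector) = scaleR r (scaleC c x)"
  by (simp only: scaleR_scaleC scaleC_scaleC mult.commute)

lemma scaleC_diff_left: "scaleC (a - b) (x::'a::complex_vector) = scaleC a x - scaleC b x"
  using scaleC_add_left[of "a - b" b x] by (simp add: eq_diff_eq)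

lemma inner_scaleC_i_right: "inner x (scaleC \<i> y::'a::complex_inner) = - inner (scaleC \<i> x) y"
  using inner_scaleC_i[of x "scaleC \<i> y"] by (simp add: scaleC_i_i)

lemma inner_scaleC_i_self: "inner x (scaleC \<i> x::'a::complex_inner) = 0"
  using inner_scaleC_i_right[of x x] by (simp add: inner_commute)

lemma norm_scaleC: "norm (scaleC c x::'a::complex_inner) = cmod c * norm x"
proof -
  have "(norm (scaleC c x))\<^sup>2 = inner (scaleC c x) (scaleC c x)" by (simp add: power2_norm_eq_inner)
  also have "\<dots> = (Re c)\<^sup>2 * inner x x + (Im c)\<^sup>2 * inner (scaleC \<i> x) (scaleC \<i> x)
       + 2 * Re c * Im c * inner x (scaleC \<i> x)"
    by (simp add: scaleC_Re_Im[of c x] inner_add_left inner_add_right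
        inner_commute[of "scaleC \<i> x" x] algebra_simps power2_eq_square)
  also have "\<dots> = ((Re c)\<^sup>2 + (Im c)\<^sup>2) * inner x x"
    by (simp only: inner_scaleC_i inner_scaleC_i_self) (simp add: algebra_simps)
  also have "\<dots> = (cmod c * norm x)\<^sup>2"
    by (simp add: cmod_power2 power_mult_distrib power2_norm_eq_inner)
  finally show ?thesis by (simp add: power2_eq_iff_nonneg)
qed

lemma bounded_linear_scaleC: "bounded_linear (scaleC c :: 'a::complex_inner \<Rightarrow> 'a)"
  by (rule bounded_linear_intro[where K="cmod c"])
     (simp_all add: scaleC_add_right scaleC_scaleR_commute norm_scaleC mult.commute)

lemma cblinear_zero: "cblinear J \<Longrightarrow> J 0 = 0"
  unfolding cblinear_def using bounded_linear.linear linear_0 by blast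

lemma eigenvalue_in_op_spectrum:
  assumes "T x = scaleC \<mu> x" and "x \<noteq> 0"
  shows "\<mu> \<in> op_spectrum T"
proof (rule ccontr)
  assume "\<mu> \<notin> op_spectrum T"
  then obtain S where S: "cblinear S" "S \<circ> (\<lambda>x. T x - scaleC \<mu> x) = id"
    unfolding op_spectrum_def invertible_op_def by blast
  have "S (T x - scaleC \<mu> x) = x" using S(2) by (metis comp_apply id_apply)
  then have "S 0 = x" using assms(1) by simp
  then show False using cblinear_zero[OF S(1)] assms(2) by simp
qed

subsection \<open>Orthonormal sequences\<close>

text \<open>Orthonormality for the complex inner product, whose real part is \<open>inner\<close> and whose
imaginary part is \<open>inner x (scaleC \<i> y)\<close>; \<open>ccoeff e k x\<close> is the complex inner product of
\<open>e k\<close> and \<open>x\<close>.\<close>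

definition corthonormal :: "nat set \<Rightarrow> (nat \<Rightarrow> 'a::complex_inner) \<Rightarrow> bool" where
  "corthonormal I e \<longleftrightarrow>
     (\<forall>j\<in>I. \<forall>k\<in>I. inner (e j) (e k) = (if j = k then 1 else 0) \<and> inner (e j) (scaleC \<i> (e k)) = 0)"

definition ccoeff :: "(nat \<Rightarrow> 'a::complex_inner) \<Rightarrow> nat \<Rightarrow> 'a \<Rightarrow> complex" where
  "ccoeff e k x = Complex (inner (e k) x) (inner (scaleC \<i> (e k)) x)"

lemma ccoeff_add: "ccoeff e k (x + y) = ccoeff e k x + ccoeff e k y"
  by (simp add: ccoeff_def inner_add_right complex_eq_iff)

lemma ccoeff_diff: "ccoeff e k (x - y) = ccoeff e k x - ccoeff e k y"
  by (simp add: ccoeff_def inner_diff_right complex_eq_iff)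

lemma ccoeff_sum: "ccoeff e k (sum f A) = (\<Sum>a\<in>A. ccoeff e k (f a))"
  by (simp add: ccoeff_def inner_sum_right complex_eq_iff)

lemma ccoeff_scaleC: "ccoeff e k (scaleC c x) = c * ccoeff e k x"
proof -
  have "ccoeff e k (scaleC \<i> x) = \<i> * ccoeff e k x"
    by (simp add: ccoeff_def complex_eq_iff inner_scaleC_i_right scaleC_i_i)
  then show ?thesis
    by (simp add: scaleC_Re_Im[of c x] ccoeff_add ccoeff_def complex_eq_iff algebra_simps)
qed

lemma bounded_linear_ccoeff: "bounded_linear (ccoeff e k)"
proof (rule bounded_linear_intro[where K="2 * norm (e k)"])
  fix x
  have "cmod (ccoeff e k x) \<le> \<bar>inner (e k) x\<bar> + \<bar>inner (scaleC \<i> (e k)) x\<bar>"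
    using cmod_le[of "ccoeff e k x"] by (simp only: ccoeff_def complex.sel)
  also have "\<dots> \<le> norm (e k) * norm x + norm (scaleC \<i> (e k)) * norm x"
    by (intro add_mono Cauchy_Schwarz_ineq2)
  finally show "norm (ccoeff e k x) \<le> norm x * (2 * norm (e k))" by (simp add: norm_scaleC)
qed (auto simp: ccoeff_def inner_add_right complex_eq_iff)

lemma inner_scaleC_right_ccoeff: "inner y (scaleC a (e k)) = inner a (ccoeff e k y)"
  by (simp add: scaleC_Re_Im[of a "e k"] inner_add_right ccoeff_def inner_complex_def inner_commute)

lemma ccoeff_orthonormal:
  "corthonormal I e \<Longrightarrow> j \<in> I \<Longrightarrow> k \<in> I \<Longrightarrow> ccoeff e k (e j) = (if j = k then 1 else 0)"
  unfolding corthonormal_def ccoeff_def by (auto simp: complex_eq_iff inner_commute)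

lemma ccoeff_sum_orthonormal:
  assumes "corthonormal I e" "finite F" "F \<subseteq> I" "k \<in> I"
  shows "ccoeff e k (\<Sum>j\<in>F. scaleC (a j) (e j)) = (if k \<in> F then a k else 0)"
proof -
  have "ccoeff e k (\<Sum>j\<in>F. scaleC (a j) (e j)) = (\<Sum>j\<in>F. a j * (if j = k then 1 else 0))"
    using assms by (auto simp: ccoeff_sum ccoeff_scaleC ccoeff_orthonormal intro!: sum.cong)
  then show ?thesis using assms(2) by (simp add: if_distrib cong: if_cong)
qed

lemma norm_sum_orthonormal:
  assumes "corthonormal I e" "finite F" "F \<subseteq> I"
  shows "(norm (\<Sum>j\<in>F. scaleC (a j) (e j)))\<^sup>2 = (\<Sum>j\<in>F. (cmod (a j))\<^sup>2)"
proof -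
  let ?P = "\<Sum>j\<in>F. scaleC (a j) (e j)"
  have "(norm ?P)\<^sup>2 = (\<Sum>j\<in>F. inner (a j) (ccoeff e j ?P))"
    by (simp add: power2_norm_eq_inner inner_sum_right inner_scaleC_right_ccoeff)
  also have "\<dots> = (\<Sum>j\<in>F. (cmod (a j))\<^sup>2)"
    using assms by (intro sum.cong refl) (auto simp: ccoeff_sum_orthonormal power2_norm_eq_inner subset_iff)
  finally show ?thesis .
qed

lemma bessel_inequality:
  assumes "corthonormal I e" "finite F" "F \<subseteq> I"
  shows "(\<Sum>k\<in>F. (cmod (ccoeff e k x))\<^sup>2) \<le> (norm x)\<^sup>2"
proof -
  let ?P = "\<Sum>k\<in>F. scaleC (ccoeff e k x) (e k)"
  have "ccoeff e k (x - ?P) = 0" if "k \<in> F" for k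
    using assms that ccoeff_sum_orthonormal[OF assms, of k "\<lambda>k. ccoeff e k x"]
    by (auto simp: ccoeff_diff)
  then have orth: "inner (x - ?P) ?P = 0"
    by (simp add: inner_sum_right inner_scaleC_right_ccoeff)
  have "(norm x)\<^sup>2 = inner (?P + (x - ?P)) (?P + (x - ?P))" by (simp add: power2_norm_eq_inner)
  also have "\<dots> = (norm ?P)\<^sup>2 + (norm (x - ?P))\<^sup>2 + 2 * inner (x - ?P) ?P"
    by (simp only: inner_add_left inner_add_right power2_norm_eq_inner inner_commute[of ?P "x - ?P"])
  finally have "(norm x)\<^sup>2 = (norm ?P)\<^sup>2 + (norm (x - ?P))\<^sup>2" using orth by simp
  then have "(norm ?P)\<^sup>2 \<le> (norm x)\<^sup>2" using orth by simp
  then show ?thesis using norm_sum_orthonormal[OF assms] by simp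
qed

lemma ccoeff_eq_0_iff: "ccoeff e k x = 0 \<longleftrightarrow> inner (e k) x = 0 \<and> inner (scaleC \<i> (e k)) x = 0"
  by (simp add: ccoeff_def complex_eq_iff)

lemma corthonormal_inj_on: "corthonormal I e \<Longrightarrow> inj_on e I"
  by (rule inj_onI) (metis corthonormal_def zero_neq_one)

lemma corthonormal_extend:
  assumes e: "corthonormal {..<n} e" and v: "norm v = 1" "\<And>k. k < n \<Longrightarrow> ccoeff e k v = 0"
  shows "corthonormal {..<Suc n} (e(n := v))"
  unfolding corthonormal_def
proof (intro ballI)
  fix j k assume j: "j \<in> {..<Suc n}" and k: "k \<in> {..<Suc n}"
  have v_orth: "inner (e k) v = 0" "inner (scaleC \<i> (e k)) v = 0" if "k < n" for k
    using v(2)[OF that] by (simp_all add: ccoeff_eq_0_iff)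
  show "inner ((e(n := v)) j) ((e(n := v)) k) = (if j = k then 1 else 0) \<and>
        inner ((e(n := v)) j) (scaleC \<i> ((e(n := v)) k)) = 0"
  proof (cases "j = n"; cases "k = n")
    assume "j = n" "k = n"
    then show ?thesis using v(1) by (simp add: inner_scaleC_i_self power2_norm_eq_inner[symmetric])
  next
    assume "j = n" "k \<noteq> n"
    then show ?thesis using v_orth[of k] k by (simp add: inner_commute)
  next
    assume "j \<noteq> n" "k = n"
    then show ?thesis using v_orth[of j] j by (simp add: inner_scaleC_i_right inner_commute[of "e j" v])
  next
    assume "j \<noteq> n" "k \<noteq> n"
    then show ?thesis using e j k by (simp add: corthonormal_def)
  qed
qed

lemma sum_scaleC_in_cspan:
  assumes "inj_on f A" "finite A"
  shows "(\<Sum>a\<in>A. scaleC (c a) (f a)) \<in> cspan (f ` A)"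
  unfolding cspan_def using assms
  by (auto intro!: exI[of _ "f ` A"] exI[of _ "c \<circ> the_inv_into A f"]
      simp: sum.reindex the_inv_into_f_f)

lemma exists_unit_orthogonal:
  assumes "infinite_dimensional TYPE('a::complex_inner)" and e: "corthonormal {..<n} (e :: nat \<Rightarrow> 'a)"
  shows "\<exists>v. norm v = 1 \<and> (\<forall>k<n. ccoeff e k v = 0)"
proof -
  obtain x where x: "x \<notin> cspan (e ` {..<n})"
    using assms(1) unfolding infinite_dimensional_def by blast
  define w where "w = x - (\<Sum>k<n. scaleC (ccoeff e k x) (e k))"
  have w_orth: "ccoeff e k w = 0" if "k < n" for k
    using e that by (simp add: w_def ccoeff_diff ccoeff_sum_orthonormal)
  have "w \<noteq> 0"
    using x sum_scaleC_in_cspan[OF corthonormal_inj_on[OF e], of "\<lambda>k. ccoeff e k x"] by (auto simp: w_def)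
  then have "norm (scaleR (1 / norm w) w) = 1" by simp
  moreover have "ccoeff e k (scaleR (1 / norm w) w) = 0" if "k < n" for k
    using w_orth[OF that] by (simp add: scaleR_scaleC ccoeff_scaleC)
  ultimately show ?thesis by blast
qed

lemma exists_corthonormal_sequence:
  assumes "infinite_dimensional TYPE('a::complex_inner)"
  shows "\<exists>e :: nat \<Rightarrow> 'a. corthonormal UNIV e"
proof -
  have step: "\<exists>e'. corthonormal {..<Suc n} e' \<and> (\<forall>k<n. e' k = e k)"
    if e: "corthonormal {..<n} e" for n and e :: "nat \<Rightarrow> 'a"
  proof -
    obtain v where "norm v = 1" "\<forall>k<n. ccoeff e k v = 0"
      using exists_unit_orthogonal[OF assms e] by blast
    then have "corthonormal {..<Suc n} (e(n := v))"
      using corthonormal_extend[OF e] by blast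
    then show ?thesis by (intro exI[of _ "e(n := v)"]) simp
  qed
  have "\<exists>e :: nat \<Rightarrow> 'a. corthonormal {..<0} e"
    by (simp add: corthonormal_def)
  from dependent_nat_choice[of "\<lambda>n e. corthonormal {..<n} e" "\<lambda>n e e'. \<forall>k<n. e' k = e k", OF this step]
  obtain f :: "nat \<Rightarrow> nat \<Rightarrow> 'a"
    where f: "\<And>n. corthonormal {..<n} (f n)" "\<And>n k. k < n \<Longrightarrow> f (Suc n) k = f n k"
    by blast
  have stable: "k < n \<Longrightarrow> f n k = f (Suc k) k" for n k
    by (induction n) (auto simp: less_Suc_eq f(2))
  have "corthonormal UNIV (\<lambda>k. f (Suc k) k)"
    unfolding corthonormal_def
  proof (intro ballI)
    fix j k :: nat
    show "inner (f (Suc j) j) (f (Suc k) k) = (if j = k then 1 else 0) \<and>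
          inner (f (Suc j) j) (scaleC \<i> (f (Suc k) k)) = 0"
    proof -
      let ?m = "Suc (max j k)"
      have "j \<in> {..<?m}" "k \<in> {..<?m}" by auto
      then have "inner (f ?m j) (f ?m k) = (if j = k then 1 else 0) \<and> inner (f ?m j) (scaleC \<i> (f ?m k)) = 0"
        using f(1)[of ?m] unfolding corthonormal_def by blast
      moreover have "f ?m j = f (Suc j) j" "f ?m k = f (Suc k) k" by (auto intro: stable)
      ultimately show ?thesis by simp
    qed
  qed
  then show ?thesis by blast
qed

subsection \<open>The backward shift\<close>

lemma summable_orthonormal_expansion:
  assumes e: "corthonormal UNIV (e :: nat \<Rightarrow> 'a::chilbert_space)" and a: "summable (\<lambda>n. (cmod (a n))\<^sup>2)"
  shows "summable (\<lambda>n. scaleC (a n) (e n))"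
  unfolding summable_Cauchy
proof (intro allI impI)
  fix \<epsilon> :: real assume "\<epsilon> > 0"
  then obtain N where N: "\<And>m n. m \<ge> N \<Longrightarrow> norm (\<Sum>k\<in>{m..<n}. (cmod (a k))\<^sup>2) < \<epsilon>\<^sup>2"
    using a unfolding summable_Cauchy by (meson zero_less_power)
  show "\<exists>N. \<forall>m\<ge>N. \<forall>n. norm (\<Sum>k\<in>{m..<n}. scaleC (a k) (e k)) < \<epsilon>"
  proof (intro exI allI impI)
    fix m n assume "m \<ge> N"
    have "(norm (\<Sum>k\<in>{m..<n}. scaleC (a k) (e k)))\<^sup>2 = (\<Sum>k\<in>{m..<n}. (cmod (a k))\<^sup>2)"
      by (rule norm_sum_orthonormal[OF e]) auto
    also have "\<dots> < \<epsilon>\<^sup>2" using N[OF \<open>m \<ge> N\<close>, of n] by (simp add: sum_nonneg)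
    finally show "norm (\<Sum>k\<in>{m..<n}. scaleC (a k) (e k)) < \<epsilon>"
      using \<open>\<epsilon> > 0\<close> by (simp add: power_less_imp_less_base)
  qed
qed

lemma norm_suminf_orthonormal:
  assumes e: "corthonormal UNIV (e :: nat \<Rightarrow> 'a::chilbert_space)" and a: "summable (\<lambda>n. (cmod (a n))\<^sup>2)"
  shows "(norm (\<Sum>n. scaleC (a n) (e n)))\<^sup>2 = (\<Sum>n. (cmod (a n))\<^sup>2)"
proof (rule LIMSEQ_unique)
  show "(\<lambda>N. (norm (\<Sum>n<N. scaleC (a n) (e n)))\<^sup>2) \<longlonglongrightarrow> (norm (\<Sum>n. scaleC (a n) (e n)))\<^sup>2"
    by (intro tendsto_power tendsto_norm summable_LIMSEQ summable_orthonormal_expansion[OF e a])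
  have "(\<lambda>N. (norm (\<Sum>n<N. scaleC (a n) (e n)))\<^sup>2) = (\<lambda>N. \<Sum>n<N. (cmod (a n))\<^sup>2)"
    using norm_sum_orthonormal[OF e] by auto
  then show "(\<lambda>N. (norm (\<Sum>n<N. scaleC (a n) (e n)))\<^sup>2) \<longlonglongrightarrow> (\<Sum>n. (cmod (a n))\<^sup>2)"
    using summable_LIMSEQ[OF a] by simp
qed

lemma ccoeff_suminf_orthonormal:
  assumes e: "corthonormal UNIV (e :: nat \<Rightarrow> 'a::chilbert_space)" and a: "summable (\<lambda>n. (cmod (a n))\<^sup>2)"
  shows "ccoeff e m (\<Sum>n. scaleC (a n) (e n)) = a m"
proof -
  have "ccoeff e m (\<Sum>n. scaleC (a n) (e n)) = (\<Sum>n. ccoeff e m (scaleC (a n) (e n)))"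
    by (rule bounded_linear.suminf[OF bounded_linear_ccoeff summable_orthonormal_expansion[OF e a]])
  also have "\<dots> = (\<Sum>n. if n = m then a n else 0)"
    by (rule arg_cong[where f=suminf], rule ext) (simp add: ccoeff_scaleC ccoeff_orthonormal[OF e])
  also have "\<dots> = a m" by (rule sums_unique[OF sums_single, symmetric])
  finally show ?thesis .
qed

lemma summable_ccoeff_square:
  assumes "corthonormal UNIV e"
  shows "summable (\<lambda>n. (cmod (ccoeff e n x))\<^sup>2)"
  by (rule summableI_nonneg_bounded[where x="(norm x)\<^sup>2"]) (use bessel_inequality[OF assms] in auto)

lemma suminf_ccoeff_square_le:
  assumes "corthonormal UNIV e"
  shows "(\<Sum>n. (cmod (ccoeff e n x))\<^sup>2) \<le> (norm x)\<^sup>2"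
  by (rule suminf_le_const[OF summable_ccoeff_square[OF assms]]) (use bessel_inequality[OF assms] in auto)

definition backward_shift :: "(nat \<Rightarrow> 'a::complex_inner) \<Rightarrow> 'a \<Rightarrow> 'a" where
  "backward_shift e x = (\<Sum>n. scaleC (ccoeff e (Suc n) x) (e n))"

lemma summable_backward_shift:
  assumes e: "corthonormal UNIV (e :: nat \<Rightarrow> 'a::chilbert_space)"
  shows "summable (\<lambda>n. scaleC (ccoeff e (Suc n) x) (e n))"
  by (intro summable_orthonormal_expansion[OF e]) (subst summable_Suc_iff, rule summable_ccoeff_square[OF e])

lemma norm_backward_shift_le:
  assumes e: "corthonormal UNIV (e :: nat \<Rightarrow> 'a::chilbert_space)"
  shows "norm (backward_shift e x) \<le> norm x"
proof -
  have "(norm (backward_shift e x))\<^sup>2 = (\<Sum>n. (cmod (ccoeff e (Suc n) x))\<^sup>2)"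
    unfolding backward_shift_def
    by (intro norm_suminf_orthonormal[OF e]) (subst summable_Suc_iff, rule summable_ccoeff_square[OF e])
  also have "\<dots> = (\<Sum>n. (cmod (ccoeff e n x))\<^sup>2) - (cmod (ccoeff e 0 x))\<^sup>2"
    by (rule suminf_split_head[OF summable_ccoeff_square[OF e]])
  also have "\<dots> \<le> (norm x)\<^sup>2"
    using suminf_ccoeff_square_le[OF e, of x] zero_le_power2[of "cmod (ccoeff e 0 x)"] by linarith
  finally show ?thesis by (rule power2_le_imp_le) simp
qed

lemma backward_shift_scaleC:
  assumes e: "corthonormal UNIV (e :: nat \<Rightarrow> 'a::chilbert_space)"
  shows "backward_shift e (scaleC c x) = scaleC c (backward_shift e x)"
  unfolding backward_shift_def
  using bounded_linear.suminf[OF bounded_linear_scaleC summable_backward_shift[OF e, of x], of c]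
  by (simp add: ccoeff_scaleC scaleC_scaleC)

lemma cblinear_backward_shift:
  assumes e: "corthonormal UNIV (e :: nat \<Rightarrow> 'a::chilbert_space)"
  shows "cblinear (backward_shift e)"
  unfolding cblinear_def
proof (intro conjI allI)
  have "backward_shift e (x + y) = backward_shift e x + backward_shift e y" for x y
    unfolding backward_shift_def using summable_backward_shift[OF e, of x] summable_backward_shift[OF e, of y]
    by (simp add: ccoeff_add scaleC_add_left suminf_add)
  then show "bounded_linear (backward_shift e)"
    by (intro bounded_linear_intro[where K=1])
       (auto simp: norm_backward_shift_le[OF e] scaleR_scaleC backward_shift_scaleC[OF e])
qed (rule backward_shift_scaleC[OF e])

lemma backward_shift_eigenvalue:
  assumes e: "corthonormal UNIV (e :: nat \<Rightarrow> 'a::chilbert_space)" and z: "cmod z < 1"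
  shows "\<exists>v. v \<noteq> 0 \<and> backward_shift e v = scaleC z v"
proof (intro exI conjI)
  define v where "v = (\<Sum>n. scaleC (z ^ n) (e n))"
  have "(\<lambda>n. (cmod (z ^ n))\<^sup>2) = (\<lambda>n. ((cmod z)\<^sup>2) ^ n)"
    by (simp add: norm_power power2_eq_square power_mult_distrib)
  moreover have "norm ((cmod z)\<^sup>2) < 1"
    using z by (simp add: abs_square_less_1)
  ultimately have "summable (\<lambda>n. (cmod (z ^ n))\<^sup>2)"
    by (simp add: summable_geometric)
  then have coeffs: "ccoeff e m v = z ^ m" for m
    unfolding v_def by (rule ccoeff_suminf_orthonormal[OF e])
  then show "v \<noteq> 0" by (metis ccoeff_diff diff_self power_0 zero_neq_one)
  have "backward_shift e v = (\<Sum>n. scaleC z (scaleC (z ^ n) (e n)))"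
    unfolding backward_shift_def by (simp add: coeffs scaleC_scaleC)
  also have "\<dots> = scaleC z v"
    unfolding v_def using \<open>summable (\<lambda>n. (cmod (z ^ n))\<^sup>2)\<close>
    by (intro bounded_linear.suminf[OF bounded_linear_scaleC, symmetric] summable_orthonormal_expansion[OF e])
  finally show "backward_shift e v = scaleC z v" .
qed

subsection \<open>Universal operators\<close>

lemma universal_eigenvalue_disc:
  assumes inf: "infinite_dimensional TYPE('a::chilbert_space)" and U: "universal (U :: 'a \<Rightarrow> 'a)"
  shows "\<exists>r>0. \<forall>w. cmod w < r \<longrightarrow> (\<exists>x. x \<noteq> 0 \<and> U x = scaleC w x)"
proof -
  obtain e :: "nat \<Rightarrow> 'a" where e: "corthonormal UNIV e"
    using exists_corthonormal_sequence[OF inf] by blast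
  obtain M c where c: "c \<noteq> 0" and "restr_similar U M (\<lambda>x. scaleC c (backward_shift e x))"
    using U[unfolded universal_def, THEN conjunct2, rule_format, OF cblinear_backward_shift[OF e]] by blast
  then obtain J where J: "cblinear J" "inj J" "\<And>x. U (J x) = J (scaleC c (backward_shift e x))"
    unfolding restr_similar_def by blast
  have "\<exists>x. x \<noteq> 0 \<and> U x = scaleC w x" if w: "cmod w < cmod c" for w
  proof -
    have "cmod (w / c) < 1" using w c by (simp add: norm_divide divide_less_eq)
    then obtain v where v: "v \<noteq> 0" "backward_shift e v = scaleC (w / c) v"
      using backward_shift_eigenvalue[OF e] by blast
    have "U (J v) = scaleC w (J v)"
      using J(3)[of v] J(1) c by (simp add: v(2) scaleC_scaleC cblinear_def)
    moreover have "J v \<noteq> 0"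
      using J(2) cblinear_zero[OF J(1)] v(1) by (metis injD)
    ultimately show ?thesis by blast
  qed
  then show ?thesis using c by (intro exI[of _ "cmod c"]) auto
qed

lemma universal_shift_in_interior_spectrum:
  assumes "infinite_dimensional TYPE('a::chilbert_space)"
    and "universal (\<lambda>x. T x - scaleC l x :: 'a)"
  shows "l \<in> interior (op_spectrum T)"
proof -
  obtain r where "r > 0" and eig: "\<And>w. cmod w < r \<Longrightarrow> \<exists>x. x \<noteq> 0 \<and> T x - scaleC l x = scaleC w x"
    using universal_eigenvalue_disc[OF assms] by blast
  have "ball l r \<subseteq> op_spectrum T"
  proof
    fix \<mu> assume "\<mu> \<in> ball l r"
    then have "cmod (\<mu> - l) < r" by (simp add: dist_norm norm_minus_commute)
    then obtain x where "x \<noteq> 0" "T x - scaleC l x = scaleC (\<mu> - l) x"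
      using eig by blast
    then show "\<mu> \<in> op_spectrum T"
      by (intro eigenvalue_in_op_spectrum[of T x]) (simp_all add: scaleC_diff_left)
  qed
  then show ?thesis using \<open>r > 0\<close> mem_interior by blast
qed

theorem corollary2p4:
  fixes T :: "'h::chilbert_space \<Rightarrow> 'h" and l :: complex
  assumes "separable TYPE('h)" and "infinite_dimensional TYPE('h)"
    and "cblinear T"
  shows "(l \<in> frontier (op_spectrum T) \<longrightarrow> \<not> universal (\<lambda>x. T x - scaleC l x)) \<and>
         (op_spectrum T = frontier (op_spectrum T) \<longrightarrow>
            (\<forall>\<mu>. \<not> universal (\<lambda>x. T x - scaleC \<mu> x)))"
proof (intro conjI impI allI notI)
  assume "l \<in> frontier (op_spectrum T)" and "universal (\<lambda>x. T x - scaleC l x)"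
  then show False
    using universal_shift_in_interior_spectrum[OF assms(2)] by (simp add: frontier_def)
next
  fix \<mu> assume "op_spectrum T = frontier (op_spectrum T)" and "universal (\<lambda>x. T x - scaleC \<mu> x)"
  then show False
    using universal_shift_in_interior_spectrum[OF assms(2)] interior_subset by (force simp: frontier_def)
qed

end
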